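(* Let $\lambda$ and $\mu$ be infinite cardinals with $\lambda^{<\mu}=\lambda$, and let $0<k<t\le 2k$ be natural numbers. Then $\chi_{\rm CF}(\lambda,t,k+1)\ge\mu$.
   Context: For a family $\mathcal A$ and cardinal $\rho$, $f:\bigcup\mathcal A\to\rho$ is a conflict free coloring of $\mathcal A$ if for every $A\in\mathcal A$ some $\zeta<\rho$ has $|A\cap f^{-1}\{\zeta\}|=1$; $\chi_{\rm CF}(\mathcal A)$ is the least such $\rho$. A $(\lambda,\kappa,\mu)$-system is a family of $\lambda$ sets each of size $\kappa$, distinct members meeting in fewer than $\mu$ points; $\chi_{\rm CF}(\lambda,\kappa,\mu)$ is the supremum of $\chi_{\rm CF}(\mathcal A)$ over all $(\lambda,\kappa,\mu)$-systems. *)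

theory Defs
  imports Main
begin

definition cf_coloring :: "'a set set \<Rightarrow> ('a \<Rightarrow> 'c) \<Rightarrow> 'c set \<Rightarrow> bool" where
  "cf_coloring F f R \<longleftrightarrow>
     (\<forall>x\<in>\<Union>F. f x \<in> R) \<and> (\<forall>A\<in>F. \<exists>z\<in>R. card (A \<inter> f -` {z}) = 1)"

text \<open>chi_CF(F) <= |R| iff F has a conflict free colouring with colour set R.\<close>
definition cf_colorable :: "'a set set \<Rightarrow> 'c set \<Rightarrow> bool" where
  "cf_colorable F R \<longleftrightarrow> (\<exists>f. cf_coloring F f R)"

text \<open>(lambda, t, m)-system with lambda = |L| and finite kappa = t:
  |L| many sets, each of size t, pairwise intersections of size < m.\<close>
definition is_system :: "'b set \<Rightarrow> nat \<Rightarrow> nat \<Rightarrow> 'a set set \<Rightarrow> bool" where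
  "is_system L t m F \<longleftrightarrow>
     ordIso2 (card_of F) (card_of L) \<and>
     (\<forall>A\<in>F. finite A \<and> card A = t) \<and>
     (\<forall>A\<in>F. \<forall>B\<in>F. A \<noteq> B \<longrightarrow> card (A \<inter> B) < m)"

text \<open>lambda^{<mu} = lambda, lambda = |L|, mu = |M|: for every nu < mu, lambda^nu <= lambda
  (the reverse inequality sup >= lambda is automatic for infinite mu, via nu = 1).
  Every cardinal nu < mu is the cardinality of a subset of M.\<close>
definition exp_below_eq :: "'a set \<Rightarrow> 'b set \<Rightarrow> bool" where
  "exp_below_eq L M \<longleftrightarrow>
     (\<forall>N. N \<subseteq> M \<longrightarrow> ordLess2 (card_of N) (card_of M) \<longrightarrow>
          ordLeq2 (card_of (Func N L)) (card_of L))"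

end

theory Submission
  imports Defs
begin

(*
  Write t = 3z + 2m with z \<le> 1 and 2z + m \<le> k, and colour each point y by its pattern, the
  list of colours of m + 1 copies (y, 0), ..., (y, m). There are fewer than \<mu> patterns, so
  \<lambda>^{<\<mu>} = \<lambda> lets every point x code a level, an index and, for every pattern c, a pair of
  points. An edge is a point x together with a pattern c whose pair lies strictly below the level
  of x, where the lower pairs of x for distinct patterns are disjoint.

  Every pattern assignment has a monochromatic edge: otherwise, for each level \<alpha>, the points of
  level \<alpha> whose pairs witness all patterns repeated below \<alpha> avoid these patterns, and two of them
  (with distinct indices) share a pattern d \<alpha>; then d \<alpha> is repeated below every higher level but
  not below \<alpha>, so d injects L into the patterns.

  An edge x, {a, b} yields the set of z copies of x, a, b and m further copies of x, a. It has
  t points, two such sets meet in at most 2z + m \<le> k points, and on a monochromatic edge every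
  colour class has 3i + 2j points, never exactly one.
*)

unbundle cardinal_syntax

lemma card_of_finite_ordLess_infinite:
  "finite A \<Longrightarrow> infinite B \<Longrightarrow> |A| <o |B|"
  by (rule finite_ordLess_infinite[OF card_of_Well_order card_of_Well_order])
    (simp_all add: Field_card_of)

lemma card_of_lists_length_le:
  assumes "infinite R"
  shows "|{xs. set xs \<subseteq> R \<and> length xs = n}| \<le>o |R|"
proof (induction n)
  case 0
  have "{xs. set xs \<subseteq> R \<and> length xs = 0} = {[]}" by auto
  moreover have "R \<noteq> {}" using assms by auto
  ultimately show ?case using card_of_singl_ordLeq by metis
next
  case (Suc n)
  let ?S = "{xs. set xs \<subseteq> R \<and> length xs = n}"
  obtain r where "r \<in> R" using assms by (metis ex_in_conv finite.emptyI)
  then have "replicate n r \<in> ?S" by auto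
  then have "?S \<noteq> {}" by blast
  have "{xs. set xs \<subseteq> R \<and> length xs = Suc n} \<subseteq> (\<lambda>(a, xs). a # xs) ` (R \<times> ?S)"
    by (auto simp: length_Suc_conv)
  then have "|{xs. set xs \<subseteq> R \<and> length xs = Suc n}| \<le>o |(\<lambda>(a, xs). a # xs) ` (R \<times> ?S)|"
    by (rule card_of_mono1)
  also have "|(\<lambda>(a, xs). a # xs) ` (R \<times> ?S)| \<le>o |R \<times> ?S|" by (rule card_of_image)
  also have "|R \<times> ?S| =o |R|"
    using card_of_Times_infinite[OF assms \<open>?S \<noteq> {}\<close> Suc.IH] by blast
  finally show ?case using ordIso_imp_ordLeq ordLeq_transitive by blast
qed

lemma card_of_lists_length_ordLess:
  assumes "|R| <o |M|" and "infinite M"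
  shows "|{xs. set xs \<subseteq> R \<and> length xs = n}| <o |M|"
proof (cases "finite R")
  case True
  then show ?thesis
    using card_of_finite_ordLess_infinite[OF finite_lists_length_eq assms(2)] by blast
next
  case False
  then show ?thesis using ordLeq_ordLess_trans[OF card_of_lists_length_le assms(1)] by blast
qed

lemma card_of_Func_map_le:
  assumes "f1 ` A1 = B1" and "inj_on f2 B2" and "f2 ` B2 \<subseteq> A2" and "B2 = {} \<Longrightarrow> A2 = {}"
  shows "|Func B2 B1| \<le>o |Func A2 A1|"
  using card_of_image[of "Func_map B2 f1 f2" "Func A2 A1"] Func_map_surj[OF assms] by simp

lemma card_of_ordLess_if_Func_ordLeq:
  assumes "a \<in> L" and "b \<in> L" and "a \<noteq> b" and "|Func C L| \<le>o |L|"
  shows "|C| <o |L|"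
proof -
  have "(\<lambda>x. x = a) ` {a, b} = (UNIV :: bool set)" using assms(3) by auto
  then have "(\<lambda>x. x = a) ` L = (UNIV :: bool set)" using assms(1,2) by blast
  then have "|Func C (UNIV :: bool set)| \<le>o |Func C L|"
    by (rule card_of_Func_map_le) auto
  have "|C| <o |Pow C|" by (rule card_of_Pow)
  also have "|Pow C| =o |Func C (UNIV :: bool set)|" by (rule card_of_Pow_Func)
  also have "|Func C (UNIV :: bool set)| \<le>o |Func C L|" by fact
  also have "|Func C L| \<le>o |L|" by fact
  finally show ?thesis .
qed

lemma Func_ordLeq_if_exp_below_eq:
  assumes "exp_below_eq L M" and "|C| <o |M|"
  shows "|Func C L| \<le>o |L|"
proof -
  obtain \<beta> where \<beta>: "inj_on \<beta> C" "\<beta> ` C \<subseteq> M"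
    using ordLess_imp_ordLeq[OF assms(2)] unfolding card_of_ordLeq[symmetric] by blast
  have "|\<beta> ` C| <o |M|" using ordLeq_ordLess_trans[OF card_of_image assms(2)] .
  then have "|Func (\<beta> ` C) L| \<le>o |L|" using assms(1) \<beta>(2) unfolding exp_below_eq_def by blast
  moreover have "|Func C L| \<le>o |Func (\<beta> ` C) L|"
    by (rule card_of_Func_map_le[of id L L \<beta> C "\<beta> ` C"]) (use \<beta>(1) in auto)
  ultimately show ?thesis using ordLeq_transitive by blast
qed

lemma card_of_Times_ordLeq_infinite:
  assumes "infinite L" and "|A| \<le>o |L|" and "|B| \<le>o |L|"
  shows "|A \<times> B| \<le>o |L|"
  using card_of_Times_ordLeq_infinite_Field[of "|L|" A B] assms
  by (simp add: Field_card_of card_of_card_order_on)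

lemma exists_inj_on_Times_finite:
  assumes "infinite L" and "finite I"
  shows "\<exists>j :: 'a \<times> 'i \<Rightarrow> 'a. inj_on j (L \<times> I)"
proof -
  have "|I| \<le>o |L|"
    using ordLess_imp_ordLeq[OF card_of_finite_ordLess_infinite[OF assms(2,1)]] .
  then have "|L \<times> I| \<le>o |L|"
    by (rule card_of_Times_ordLeq_infinite[OF assms(1) ordLeq_refl[OF card_of_Card_order]])
  then show ?thesis unfolding card_of_ordLeq[symmetric] by blast
qed

lemma is_system_mono: "is_system L t n F \<Longrightarrow> n \<le> n' \<Longrightarrow> is_system L t n' F"
  unfolding is_system_def by fastforce

lemma is_system_image:
  assumes inj: "inj_on j (\<Union>F)" and system: "is_system L t n F"
  shows "is_system L t n ((`) j ` F)"
  unfolding is_system_def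
proof (intro conjI)
  have card_j: "card (j ` A) = card A" if "A \<subseteq> \<Union>F" for A
    using card_image inj_on_subset[OF inj that] by blast
  have "bij_betw ((`) j) F ((`) j ` F)" using inj_on_image[OF inj] by (rule inj_on_imp_bij_betw)
  then have "|F| =o |(`) j ` F|" using card_of_ordIso by blast
  moreover have "|F| =o |L|" using system unfolding is_system_def by blast
  ultimately show "|(`) j ` F| =o |L|" using ordIso_symmetric ordIso_transitive by blast
  show "\<forall>A'\<in>(`) j ` F. finite A' \<and> card A' = t"
  proof
    fix A' assume "A' \<in> (`) j ` F"
    then obtain A where A: "A \<in> F" "A' = j ` A" by blast
    then have "finite A" "card A = t" using system unfolding is_system_def by simp_all
    then show "finite A' \<and> card A' = t" using A card_j[OF Sup_upper[OF A(1)]] by simp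
  qed
  show "\<forall>A'\<in>(`) j ` F. \<forall>B'\<in>(`) j ` F. A' \<noteq> B' \<longrightarrow> card (A' \<inter> B') < n"
  proof (intro ballI impI)
    fix A' B' assume "A' \<in> (`) j ` F" and "B' \<in> (`) j ` F" and "A' \<noteq> B'"
    then obtain A B where A: "A \<in> F" "A' = j ` A" and B: "B \<in> F" "B' = j ` B" and "A \<noteq> B"
      by blast
    have "A' \<inter> B' = j ` (A \<inter> B)" using inj_on_image_Int[OF inj] A B by blast
    moreover have "A \<inter> B \<subseteq> \<Union>F" using A(1) by blast
    ultimately have "card (A' \<inter> B') = card (A \<inter> B)" using card_j by simp
    moreover have "card (A \<inter> B) < n" using system A(1) B(1) \<open>A \<noteq> B\<close> unfolding is_system_def by blast
    ultimately show "card (A' \<inter> B') < n" by simp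
  qed
qed

lemma cf_colorable_of_image:
  assumes inj: "inj_on j (\<Union>F)" and "cf_colorable ((`) j ` F) R"
  shows "cf_colorable F R"
proof -
  obtain f where f: "cf_coloring ((`) j ` F) f R"
    using assms(2) unfolding cf_colorable_def by blast
  have "cf_coloring F (f \<circ> j) R"
    unfolding cf_coloring_def
  proof (intro conjI ballI)
    show "(f \<circ> j) x \<in> R" if "x \<in> \<Union>F" for x
      using f that unfolding cf_coloring_def by auto
  next
    fix A assume A: "A \<in> F"
    then obtain \<zeta> where "\<zeta> \<in> R" and "card (j ` A \<inter> f -` {\<zeta>}) = 1"
      using f unfolding cf_coloring_def by blast
    moreover have "j ` A \<inter> f -` {\<zeta>} = j ` (A \<inter> (f \<circ> j) -` {\<zeta>})" by auto
    moreover have "card (j ` (A \<inter> (f \<circ> j) -` {\<zeta>})) = card (A \<inter> (f \<circ> j) -` {\<zeta>})"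
      using card_image inj_on_subset[OF inj] A by (metis Int_lower1 Sup_upper subset_trans)
    ultimately show "\<exists>\<zeta>\<in>R. card (A \<inter> (f \<circ> j) -` {\<zeta>}) = 1" by auto
  qed
  then show ?thesis unfolding cf_colorable_def by blast
qed

lemma card_Int_less_if_neq:
  assumes "finite A" and "finite B" and "card A = card B" and "A \<noteq> B"
  shows "card (A \<inter> B) < card A"
proof -
  have "\<not> A \<subseteq> B" using assms card_subset_eq by metis
  then have "A \<inter> B \<subset> A" by blast
  then show ?thesis using assms(1) psubset_card_mono by blast
qed

lemma card_Times_Un_Times:
  assumes "finite Q" "finite P" "finite Z" "finite D" and "Z \<inter> D = {}"
  shows "card (Q \<times> Z \<union> P \<times> D) = card Q * card Z + card P * card D"
  using assms by (subst card_Un_disjoint) (auto simp: card_cartesian_product)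

lemma three_two_decomposition:
  fixes k t :: nat
  assumes "0 < k" and "k < t" and "t \<le> 2 * k"
  obtains z m where "z \<le> 1" and "t = 3 * z + 2 * m" and "2 * z + m \<le> k"
proof (cases "even t")
  case True
  then obtain q where "t = 2 * q" by blast
  then show ?thesis using that[of 0 q] assms by simp
next
  case False
  then obtain q where "t = 2 * q + 1" using oddE by blast
  then show ?thesis using that[of 1 "q - 1"] assms by simp
qed

lemma not_inj_on_if_card_of_ordLess:
  assumes "|B| <o |A|" and "f ` A \<subseteq> B"
  shows "\<not> inj_on f A"
  using assms card_of_ordLess by blast

(* The index only serves to supply |L| points with the same level and the same pairs. *)
locale pair_coding =
  fixes L :: "'a set" and C :: "'c set"
    and less :: "'a \<Rightarrow> 'a \<Rightarrow> bool" (infix \<open>\<prec>\<close> 50)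
    and level :: "'a \<Rightarrow> 'a" and index :: "'a \<Rightarrow> 'a" and pair :: "'a \<Rightarrow> 'c \<Rightarrow> 'a \<times> 'a"
  assumes less_asym: "\<alpha> \<prec> \<beta> \<Longrightarrow> \<not> \<beta> \<prec> \<alpha>"
    and less_total: "\<alpha> \<in> L \<Longrightarrow> \<beta> \<in> L \<Longrightarrow> \<alpha> \<noteq> \<beta> \<Longrightarrow> \<alpha> \<prec> \<beta> \<or> \<beta> \<prec> \<alpha>"
    and coding: "\<alpha> \<in> L \<Longrightarrow> i \<in> L \<Longrightarrow> (\<And>c. c \<in> C \<Longrightarrow> p c \<in> L \<times> L) \<Longrightarrow>
      \<exists>x\<in>L. level x = \<alpha> \<and> index x = i \<and> (\<forall>c\<in>C. pair x c = p c)"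
    and card_of_colours_ordLess: "|C| <o |L|"
begin

definition pair_below :: "'a \<Rightarrow> 'a \<times> 'a \<Rightarrow> bool" where
  "pair_below \<alpha> p \<longleftrightarrow>
     fst p \<in> L \<and> snd p \<in> L \<and> fst p \<noteq> snd p \<and> level (fst p) \<prec> \<alpha> \<and> level (snd p) \<prec> \<alpha>"

definition separated :: "'a \<Rightarrow> bool" where
  "separated x \<longleftrightarrow> (\<forall>c\<in>C. \<forall>c'\<in>C. c \<noteq> c' \<longrightarrow>
     pair_below (level x) (pair x c) \<longrightarrow> pair_below (level x) (pair x c') \<longrightarrow>
     {fst (pair x c), snd (pair x c)} \<inter> {fst (pair x c'), snd (pair x c')} = {})"

definition edges :: "('a \<times> 'c) set" where
  "edges = {(x, c). x \<in> L \<and> c \<in> C \<and> pair_below (level x) (pair x c) \<and> separated x}"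

definition repeated_below :: "('a \<Rightarrow> 'c) \<Rightarrow> 'a \<Rightarrow> 'c set" where
  "repeated_below h \<alpha> = {c \<in> C. \<exists>p. pair_below \<alpha> p \<and> h (fst p) = c \<and> h (snd p) = c}"

definition monochromatic :: "('a \<Rightarrow> 'k) \<Rightarrow> 'a \<Rightarrow> 'c \<Rightarrow> bool" where
  "monochromatic h x c \<longleftrightarrow> h (fst (pair x c)) = h x \<and> h (snd (pair x c)) = h x"

lemma less_irrefl: "\<not> \<alpha> \<prec> \<alpha>"
  using less_asym by blast

lemma edge_points:
  assumes "(x, c) \<in> edges"
  shows "x \<in> L" "fst (pair x c) \<in> L" "snd (pair x c) \<in> L"
    "fst (pair x c) \<noteq> x" "snd (pair x c) \<noteq> x" "fst (pair x c) \<noteq> snd (pair x c)"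
  using assms less_irrefl unfolding edges_def pair_below_def by auto

lemma repeated_colour_witnesses:
  assumes "\<alpha> \<in> L"
  obtains p where "\<And>c. p c \<in> L \<times> L"
    and "\<And>c. pair_below \<alpha> (p c) \<longleftrightarrow> c \<in> repeated_below h \<alpha>"
    and "\<And>c. c \<in> repeated_below h \<alpha> \<Longrightarrow> h (fst (p c)) = c \<and> h (snd (p c)) = c"
proof -
  \<comment> \<open>\<open>(\<alpha>, \<alpha>)\<close> is never a pair below \<open>\<alpha>\<close>, so it marks the colours that are not repeated.\<close>
  define p where "p c = (if c \<in> repeated_below h \<alpha>
      then SOME p. pair_below \<alpha> p \<and> h (fst p) = c \<and> h (snd p) = c else (\<alpha>, \<alpha>))" for c
  have repeated: "pair_below \<alpha> (p c) \<and> h (fst (p c)) = c \<and> h (snd (p c)) = c"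
    if "c \<in> repeated_below h \<alpha>" for c
  proof -
    have "\<exists>p. pair_below \<alpha> p \<and> h (fst p) = c \<and> h (snd p) = c"
      using that unfolding repeated_below_def by blast
    from someI_ex[OF this] show ?thesis using that unfolding p_def by simp
  qed
  have other: "p c = (\<alpha>, \<alpha>)" if "c \<notin> repeated_below h \<alpha>" for c
    using that unfolding p_def by simp
  have "pair_below \<alpha> (p c) \<longleftrightarrow> c \<in> repeated_below h \<alpha>" for c
    by (cases "c \<in> repeated_below h \<alpha>") (use repeated[of c] other[of c] in \<open>auto simp: pair_below_def\<close>)
  moreover have "p c \<in> L \<times> L" for c
    using repeated[of c] \<open>\<alpha> \<in> L\<close> unfolding p_def pair_below_def by (auto simp: mem_Times_iff)
  ultimately show ?thesis using that repeated by blast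
qed

lemma point_avoiding_repeated_colours:
  assumes no_mono: "\<forall>(x, c)\<in>edges. \<not> monochromatic h x c"
    and "\<alpha> \<in> L" and "i \<in> L"
  shows "\<exists>x\<in>L. level x = \<alpha> \<and> index x = i \<and> h x \<notin> repeated_below h \<alpha>"
proof -
  obtain p where p_L: "\<And>c. p c \<in> L \<times> L"
    and p_below: "\<And>c. pair_below \<alpha> (p c) \<longleftrightarrow> c \<in> repeated_below h \<alpha>"
    and p_colour: "\<And>c. c \<in> repeated_below h \<alpha> \<Longrightarrow> h (fst (p c)) = c \<and> h (snd (p c)) = c"
    using repeated_colour_witnesses[OF \<open>\<alpha> \<in> L\<close>] by blast
  obtain x where x: "x \<in> L" "level x = \<alpha>" "index x = i" "\<forall>c\<in>C. pair x c = p c"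
    using coding[OF assms(2,3), of p] p_L by blast
  have pair_x: "pair x c = p c" if "c \<in> C" for c
    using x(4) that by blast
  have "separated x"
    unfolding separated_def
  proof (intro ballI impI)
    fix c c' assume "c \<in> C" "c' \<in> C" "c \<noteq> c'"
      and "pair_below (level x) (pair x c)" "pair_below (level x) (pair x c')"
    then have "c \<in> repeated_below h \<alpha>" "c' \<in> repeated_below h \<alpha>"
      using p_below pair_x x(2) by auto
    then have "h (fst (pair x c)) = c" "h (snd (pair x c)) = c"
      "h (fst (pair x c')) = c'" "h (snd (pair x c')) = c'"
      using p_colour pair_x[OF \<open>c \<in> C\<close>] pair_x[OF \<open>c' \<in> C\<close>] by simp_all
    then show "{fst (pair x c), snd (pair x c)} \<inter> {fst (pair x c'), snd (pair x c')} = {}"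
      using \<open>c \<noteq> c'\<close> by force
  qed
  have "h x \<notin> repeated_below h \<alpha>"
  proof
    assume repeated: "h x \<in> repeated_below h \<alpha>"
    then have "h x \<in> C" unfolding repeated_below_def by blast
    then have "(x, h x) \<in> edges"
      using p_below pair_x repeated x(1,2) \<open>separated x\<close> unfolding edges_def by simp
    moreover have "monochromatic h x (h x)"
      using p_colour[OF repeated] pair_x[OF \<open>h x \<in> C\<close>] unfolding monochromatic_def by simp
    ultimately show False using no_mono by blast
  qed
  then show ?thesis using x by blast
qed

lemma colour_repeated_above_level:
  assumes no_mono: "\<forall>(x, c)\<in>edges. \<not> monochromatic h x c"
    and "h ` L \<subseteq> C" and "\<alpha> \<in> L"
  shows "\<exists>d\<in>C. d \<notin> repeated_below h \<alpha> \<and> (\<forall>\<beta>. \<alpha> \<prec> \<beta> \<longrightarrow> d \<in> repeated_below h \<beta>)"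
proof -
  have "\<forall>i\<in>L. \<exists>x\<in>L. level x = \<alpha> \<and> index x = i \<and> h x \<notin> repeated_below h \<alpha>"
    using point_avoiding_repeated_colours[OF no_mono] \<open>\<alpha> \<in> L\<close> by blast
  then obtain X where X: "\<forall>i\<in>L. X i \<in> L \<and> level (X i) = \<alpha> \<and> index (X i) = i \<and> h (X i) \<notin> repeated_below h \<alpha>"
    by metis
  have "\<not> inj_on (h \<circ> X) L"
    by (rule not_inj_on_if_card_of_ordLess[OF card_of_colours_ordLess]) (use X assms(2) in auto)
  then obtain i i' where i: "i \<in> L" "i' \<in> L" "i \<noteq> i'" and same: "h (X i) = h (X i')"
    unfolding inj_on_def by auto
  then have "X i \<noteq> X i'" using X by metis
  then have below: "pair_below \<beta> (X i, X i')" if "\<alpha> \<prec> \<beta>" for \<beta>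
    using X i that unfolding pair_below_def by auto
  have "h (X i) \<in> C" using X i assms(2) by blast
  moreover have "h (X i) \<notin> repeated_below h \<alpha>" using X i by blast
  moreover have "h (X i) \<in> repeated_below h \<beta>" if "\<alpha> \<prec> \<beta>" for \<beta>
    using below[OF that] same \<open>h (X i) \<in> C\<close> unfolding repeated_below_def by fastforce
  ultimately show ?thesis by blast
qed

lemma monochromatic_edge:
  assumes "h ` L \<subseteq> C"
  shows "\<exists>(x, c)\<in>edges. monochromatic h x c"
proof (rule ccontr)
  assume "\<not> ?thesis"
  then have "\<forall>\<alpha>\<in>L. \<exists>d\<in>C. d \<notin> repeated_below h \<alpha> \<and> (\<forall>\<beta>. \<alpha> \<prec> \<beta> \<longrightarrow> d \<in> repeated_below h \<beta>)"
    using colour_repeated_above_level[OF _ assms] by blast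
  then obtain d where d: "\<forall>\<alpha>\<in>L. d \<alpha> \<in> C \<and> d \<alpha> \<notin> repeated_below h \<alpha> \<and>
      (\<forall>\<beta>. \<alpha> \<prec> \<beta> \<longrightarrow> d \<alpha> \<in> repeated_below h \<beta>)"
    by metis
  have "inj_on d L"
  proof (rule inj_onI, rule ccontr)
    fix \<alpha> \<beta> assume "\<alpha> \<in> L" "\<beta> \<in> L" "d \<alpha> = d \<beta>" "\<alpha> \<noteq> \<beta>"
    then consider "\<alpha> \<prec> \<beta>" | "\<beta> \<prec> \<alpha>" using less_total by blast
    then show False
      using d[rule_format, OF \<open>\<alpha> \<in> L\<close>] d[rule_format, OF \<open>\<beta> \<in> L\<close>] \<open>d \<alpha> = d \<beta>\<close> by cases auto
  qed
  moreover have "d ` L \<subseteq> C" using d by blast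
  ultimately show False using not_inj_on_if_card_of_ordLess[OF card_of_colours_ordLess] by blast
qed

end

lemma exists_strict_total_order:
  "\<exists>less :: 'a \<Rightarrow> 'a \<Rightarrow> bool. (\<forall>\<alpha> \<beta>. less \<alpha> \<beta> \<longrightarrow> \<not> less \<beta> \<alpha>) \<and>
     (\<forall>\<alpha>\<in>L. \<forall>\<beta>\<in>L. \<alpha> \<noteq> \<beta> \<longrightarrow> less \<alpha> \<beta> \<or> less \<beta> \<alpha>)"
proof -
  obtain r where "well_order_on L r" using well_order_on by blast
  then have "antisym r" and "total_on L r"
    unfolding well_order_on_def linear_order_on_def partial_order_on_def by auto
  then have "\<forall>\<alpha> \<beta>. (\<alpha>, \<beta>) \<in> r \<and> \<alpha> \<noteq> \<beta> \<longrightarrow> \<not> ((\<beta>, \<alpha>) \<in> r \<and> \<beta> \<noteq> \<alpha>)"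
    and "\<forall>\<alpha>\<in>L. \<forall>\<beta>\<in>L. \<alpha> \<noteq> \<beta> \<longrightarrow> (\<alpha>, \<beta>) \<in> r \<and> \<alpha> \<noteq> \<beta> \<or> (\<beta>, \<alpha>) \<in> r \<and> \<beta> \<noteq> \<alpha>"
    unfolding antisym_def total_on_def by blast+
  then show ?thesis by (intro exI[of _ "\<lambda>\<alpha> \<beta>. (\<alpha>, \<beta>) \<in> r \<and> \<alpha> \<noteq> \<beta>"]) simp
qed

lemma pair_coding_exists:
  fixes L :: "'a set" and C :: "'c set"
  assumes "infinite L" and Func_le: "|Func C L| \<le>o |L|"
  shows "\<exists>less level index pair. pair_coding L C less level index pair"
proof -
  obtain a where a: "a \<in> L" using assms(1) by (metis ex_in_conv finite.emptyI)
  have "infinite (L - {a})" using assms(1) by simp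
  then obtain b where b: "b \<in> L - {a}" by (metis ex_in_conv finite.emptyI)
  have L_le: "|L| \<le>o |L|" by (rule ordLeq_refl[OF card_of_Card_order])
  have "L \<times> Func C L \<times> L \<noteq> {}" using a Func_non_emp[of L C] by blast
  moreover have "|L \<times> Func C L \<times> L| \<le>o |L|"
    by (intro card_of_Times_ordLeq_infinite[OF assms(1)] L_le Func_le)
  ultimately have "\<exists>e. e ` L = L \<times> Func C L \<times> L" by (rule iffD2[OF card_of_ordLeq2])
  then obtain e where e: "e ` L = L \<times> Func C L \<times> L" ..
  have "L \<times> L \<noteq> {}" using a by blast
  moreover have "|L \<times> L| \<le>o |L|" by (rule card_of_Times_ordLeq_infinite[OF assms(1) L_le L_le])
  ultimately have "\<exists>dec. dec ` L = L \<times> L" by (rule iffD2[OF card_of_ordLeq2])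
  then obtain dec where dec: "dec ` L = L \<times> L" ..
  obtain less :: "'a \<Rightarrow> 'a \<Rightarrow> bool" where less: "\<forall>\<alpha> \<beta>. less \<alpha> \<beta> \<longrightarrow> \<not> less \<beta> \<alpha>"
    "\<forall>\<alpha>\<in>L. \<forall>\<beta>\<in>L. \<alpha> \<noteq> \<beta> \<longrightarrow> less \<alpha> \<beta> \<or> less \<beta> \<alpha>"
    using exists_strict_total_order[of L] by (elim exE conjE)
  define pair where "pair x c = dec (fst (snd (e x)) c)" for x c
  have "pair_coding L C less (fst \<circ> e) (snd \<circ> snd \<circ> e) pair"
  proof (rule pair_coding.intro)
    show "less \<alpha> \<beta> \<Longrightarrow> \<not> less \<beta> \<alpha>" for \<alpha> \<beta> using less(1) by blast
    show "\<alpha> \<in> L \<Longrightarrow> \<beta> \<in> L \<Longrightarrow> \<alpha> \<noteq> \<beta> \<Longrightarrow> less \<alpha> \<beta> \<or> less \<beta> \<alpha>" for \<alpha> \<beta> using less(2) by blast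
    show "|C| <o |L|" using card_of_ordLess_if_Func_ordLeq[OF a _ _ Func_le] b by blast
    fix \<alpha> i and p :: "'c \<Rightarrow> 'a \<times> 'a"
    assume "\<alpha> \<in> L" "i \<in> L" and p: "\<And>c. c \<in> C \<Longrightarrow> p c \<in> L \<times> L"
    define \<phi> where "\<phi> c = (if c \<in> C then inv_into L dec (p c) else undefined)" for c
    have "\<phi> c \<in> L" if "c \<in> C" for c
      using inv_into_into[of "p c" dec L] p[OF that] dec that unfolding \<phi>_def by simp
    then have "\<phi> \<in> Func C L" unfolding Func_def \<phi>_def by simp
    then have "(\<alpha>, \<phi>, i) \<in> e ` L" unfolding e using \<open>\<alpha> \<in> L\<close> \<open>i \<in> L\<close> by blast
    then obtain x where x: "e x = (\<alpha>, \<phi>, i)" "x \<in> L" by (metis imageE)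
    have "pair x c = p c" if "c \<in> C" for c
      using f_inv_into_f[of "p c" dec L] p[OF that] dec that unfolding pair_def x(1) \<phi>_def by simp
    then show "\<exists>x\<in>L. (fst \<circ> e) x = \<alpha> \<and> (snd \<circ> snd \<circ> e) x = i \<and> (\<forall>c\<in>C. pair x c = p c)"
      using x by (intro bexI[of _ x]) simp_all
  qed
  then show ?thesis by blast
qed

locale cf_family = pair_coding L "{xs. set xs \<subseteq> R \<and> length xs = Suc m}" less level index pair
  for L :: "'a set" and R :: "'r set" and m :: nat
    and less (infix \<open>\<prec>\<close> 50) and level index pair +
  fixes z :: nat
  assumes infinite_L: "infinite L" and z_le_1: "z \<le> 1" and block_size_pos: "0 < 3 * z + 2 * m"
begin

definition triple :: "'a \<Rightarrow> 'r list \<Rightarrow> 'a set" where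
  "triple x c = {x, fst (pair x c), snd (pair x c)}"

definition duo :: "'a \<Rightarrow> 'r list \<Rightarrow> 'a set" where
  "duo x c = {x, fst (pair x c)}"

(* (y, col) is the copy of y in column col; a block uses column 0 only if z = 1. *)
definition block :: "'a \<Rightarrow> 'r list \<Rightarrow> ('a \<times> nat) set" where
  "block x c = triple x c \<times> {..<z} \<union> duo x c \<times> {1..m}"

(* Pairwise disjoint and disjoint from all blocks; they only make the family have |L| members. *)
definition padding :: "'a \<Rightarrow> ('a \<times> nat) set" where
  "padding x = {x} \<times> {Suc m..m + (3 * z + 2 * m)}"

definition family :: "('a \<times> nat) set set" where
  "family = (\<lambda>(x, c). block x c) ` edges \<union> padding ` L"

lemma columns_disjoint: "{..<z} \<inter> {1..m} = {}"
  using z_le_1 by auto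

lemma duo_subset_triple: "duo x c \<subseteq> triple x c"
  unfolding duo_def triple_def by blast

lemma card_triple: "(x, c) \<in> edges \<Longrightarrow> card (triple x c) = 3"
  using edge_points[of x c] unfolding triple_def by auto

lemma card_duo: "(x, c) \<in> edges \<Longrightarrow> card (duo x c) = 2"
  using edge_points[of x c] unfolding duo_def by auto

lemma card_block: "(x, c) \<in> edges \<Longrightarrow> card (block x c) = 3 * z + 2 * m"
  using card_Times_Un_Times[OF _ _ _ _ columns_disjoint, of "triple x c" "duo x c"]
    card_triple card_duo
  unfolding block_def by (simp add: triple_def duo_def)

lemma block_Int_block:
  "block x c \<inter> block x' c' = (triple x c \<inter> triple x' c') \<times> {..<z} \<union> (duo x c \<inter> duo x' c') \<times> {1..m}"
  unfolding block_def using columns_disjoint by blast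

lemma level_less_of_mem_triple:
  "(x, c) \<in> edges \<Longrightarrow> y \<in> triple x c \<Longrightarrow> y \<noteq> x \<Longrightarrow> level y \<prec> level x"
  unfolding edges_def pair_below_def triple_def by auto

lemma no_set_between_duo_and_triple:
  assumes e: "(x, c) \<in> edges" and e': "(x', c') \<in> edges" and "(x, c) \<noteq> (x', c')"
    and "duo x c \<subseteq> A" "A \<subseteq> triple x c" "duo x' c' \<subseteq> A" "A \<subseteq> triple x' c'"
  shows False
proof (cases "x = x'")
  case True
  then have "c \<noteq> c'" using assms(3) by blast
  have "fst (pair x c) \<in> triple x c'" using assms(4,7) True unfolding duo_def by blast
  moreover have "fst (pair x c) \<noteq> x" using edge_points[OF e] by blast
  moreover have "{fst (pair x c), snd (pair x c)} \<inter> {fst (pair x c'), snd (pair x c')} = {}"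
    using e e' True \<open>c \<noteq> c'\<close> unfolding edges_def separated_def by auto
  ultimately show False unfolding triple_def by blast
next
  case False
  have "x \<in> triple x' c'" "x' \<in> triple x c" using assms(4-7) unfolding duo_def by blast+
  then have "level x \<prec> level x'" "level x' \<prec> level x"
    using level_less_of_mem_triple[OF e'] level_less_of_mem_triple[OF e] False by auto
  then show False using less_asym by blast
qed

lemma card_block_Int_le:
  assumes e: "(x, c) \<in> edges" and e': "(x', c') \<in> edges" and "(x, c) \<noteq> (x', c')"
  shows "card (block x c \<inter> block x' c') \<le> 2 * z + m"
proof -
  have "triple x c \<noteq> triple x' c'"
    using no_set_between_duo_and_triple[OF assms] duo_subset_triple by blast
  then have "card (triple x c \<inter> triple x' c') < 3"
    using card_Int_less_if_neq[of "triple x c" "triple x' c'"] card_triple[OF e] card_triple[OF e']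
    by (simp add: triple_def)
  moreover have "duo x c \<noteq> duo x' c'"
    using no_set_between_duo_and_triple[OF assms] duo_subset_triple by blast
  then have "card (duo x c \<inter> duo x' c') < 2"
    using card_Int_less_if_neq[of "duo x c" "duo x' c'"] card_duo[OF e] card_duo[OF e']
    by (simp add: duo_def)
  ultimately show ?thesis
    unfolding block_Int_block
    using card_Times_Un_Times[OF _ _ _ _ columns_disjoint, of "triple x c \<inter> triple x' c'" "duo x c \<inter> duo x' c'"]
    by (simp add: triple_def duo_def add_mono mult_right_mono)
qed

lemma block_subset: "(x, c) \<in> edges \<Longrightarrow> block x c \<subseteq> L \<times> {..m}"
  using edge_points[of x c] z_le_1 unfolding block_def triple_def duo_def by auto

lemma family_subset: "\<Union>family \<subseteq> L \<times> {..m + (3 * z + 2 * m)}"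
  using block_subset unfolding family_def padding_def by fastforce

lemma Int_padding:
  assumes "A \<in> family" and "y \<in> L" and "A \<noteq> padding y"
  shows "A \<inter> padding y = {}"
  using assms block_subset unfolding family_def padding_def by fastforce

lemma inj_on_padding: "inj_on padding L"
proof (rule inj_onI)
  fix x y assume "padding x = padding y"
  moreover have "(x, Suc m) \<in> padding x" using block_size_pos unfolding padding_def by auto
  ultimately show "x = y" unfolding padding_def by blast
qed

lemma card_of_family: "|family| =o |L|"
proof -
  have paddings: "|padding ` L| =o |L|"
    using card_of_ordIso inj_on_imp_bij_betw[OF inj_on_padding] ordIso_symmetric by blast
  have "|(\<lambda>(x, c). block x c) ` edges| \<le>o |edges|" by (rule card_of_image)
  also have "|edges| \<le>o |L \<times> {xs. set xs \<subseteq> R \<and> length xs = Suc m}|"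
    by (rule card_of_mono1) (auto simp: edges_def)
  also have "|L \<times> {xs. set xs \<subseteq> R \<and> length xs = Suc m}| \<le>o |L|"
    by (intro card_of_Times_ordLeq_infinite infinite_L ordLeq_refl card_of_Card_order
        ordLess_imp_ordLeq[OF card_of_colours_ordLess])
  finally have "|family| \<le>o |L|"
    using ordIso_imp_ordLeq[OF paddings] card_of_Un_ordLeq_infinite_Field[of "|L|"] infinite_L
    unfolding family_def by (simp add: Field_card_of card_of_card_order_on)
  moreover have "|L| \<le>o |family|"
    using ordIso_imp_ordLeq[OF ordIso_symmetric[OF paddings]] card_of_mono1[of "padding ` L" family]
      ordLeq_transitive unfolding family_def by blast
  ultimately show ?thesis using ordIso_iff_ordLeq by blast
qed

lemma family_is_system: "is_system L (3 * z + 2 * m) (2 * z + m + 1) family"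
  unfolding is_system_def
proof (intro conjI)
  show "|family| =o |L|" by (rule card_of_family)
  show "\<forall>A\<in>family. finite A \<and> card A = 3 * z + 2 * m"
    using card_block unfolding family_def padding_def block_def triple_def duo_def by auto
  show "\<forall>A\<in>family. \<forall>B\<in>family. A \<noteq> B \<longrightarrow> card (A \<inter> B) < 2 * z + m + 1"
  proof (intro ballI impI)
    fix A B assume A: "A \<in> family" and B: "B \<in> family" and "A \<noteq> B"
    show "card (A \<inter> B) < 2 * z + m + 1"
    proof (cases "A \<in> padding ` L \<or> B \<in> padding ` L")
      case True
      then have "A \<inter> B = {}" using Int_padding A B \<open>A \<noteq> B\<close> by blast
      then show ?thesis by simp
    next
      case False
      then obtain x c x' c' where "(x, c) \<in> edges" "(x', c') \<in> edges" "(x, c) \<noteq> (x', c')"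
        and "A = block x c" "B = block x' c'"
        using A B \<open>A \<noteq> B\<close> unfolding family_def by auto
      then show ?thesis using card_block_Int_le by fastforce
    qed
  qed
qed

lemma family_not_cf_colorable: "\<not> cf_colorable family R"
proof
  assume "cf_colorable family R"
  then obtain f where f_range: "\<forall>y\<in>\<Union>family. f y \<in> R"
    and f_cf: "\<forall>A\<in>family. \<exists>\<zeta>\<in>R. card (A \<inter> f -` {\<zeta>}) = 1"
    unfolding cf_colorable_def cf_coloring_def by blast
  obtain x0 where "x0 \<in> L" using infinite_L by (metis ex_in_conv finite.emptyI)
  then have "padding x0 \<in> family" unfolding family_def by blast
  then obtain r0 where "r0 \<in> R" using f_cf by blast
  \<comment> \<open>\<open>f\<close> is only known to be \<open>R\<close>-valued on the members of the family; elsewhere \<open>r0\<close> stands in.\<close>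
  define pattern where
    "pattern y = map (\<lambda>col. if f (y, col) \<in> R then f (y, col) else r0) [0..<Suc m]" for y
  have "pattern ` L \<subseteq> {xs. set xs \<subseteq> R \<and> length xs = Suc m}"
    using \<open>r0 \<in> R\<close> unfolding pattern_def by auto
  then obtain x c where e: "(x, c) \<in> edges" and mono: "monochromatic pattern x c"
    using monochromatic_edge by blast
  have block: "block x c \<in> family" using e unfolding family_def by blast
  have colour: "f (y, col) = pattern x ! col" if "(y, col) \<in> block x c" for y col
  proof -
    have "col \<le> m" and "y \<in> triple x c"
      using that z_le_1 unfolding block_def duo_def triple_def by auto
    moreover have "f (y, col) \<in> R" using f_range block that by blast
    ultimately have "pattern y ! col = f (y, col)"
      unfolding pattern_def by (simp del: upt_Suc add: nth_map_upt)
    moreover have "pattern y = pattern x"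
      using mono \<open>y \<in> triple x c\<close> unfolding monochromatic_def triple_def by auto
    ultimately show ?thesis by simp
  qed
  obtain \<zeta> where \<zeta>: "card (block x c \<inter> f -` {\<zeta>}) = 1" using f_cf block by blast
  define Z where "Z = {col \<in> {..<z}. pattern x ! col = \<zeta>}"
  define D where "D = {col \<in> {1..m}. pattern x ! col = \<zeta>}"
  have "block x c \<inter> f -` {\<zeta>} = triple x c \<times> Z \<union> duo x c \<times> D"
    using colour unfolding block_def Z_def D_def by auto
  moreover have "Z \<inter> D = {}" using columns_disjoint unfolding Z_def D_def by blast
  ultimately have "card (block x c \<inter> f -` {\<zeta>}) = 3 * card Z + 2 * card D"
    using card_Times_Un_Times[of "triple x c" "duo x c" Z D] card_triple[OF e] card_duo[OF e]
    unfolding Z_def D_def by (simp add: triple_def duo_def)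
  then have "3 * card Z + 2 * card D = 1" using \<zeta> by simp
  then show False by presburger
qed

end

theorem theorem3p7:
  fixes L :: "'a set" and M :: "'b set" and k t :: nat
  assumes "infinite L" and "infinite M"
    and "exp_below_eq L M"
    and "0 < k" and "k < t" and "t \<le> 2 * k"
  shows "\<forall>R. R \<subseteq> M \<longrightarrow> ordLess2 (card_of R) (card_of M) \<longrightarrow>
           (\<exists>F :: 'a set set. is_system L t (k + 1) F \<and> \<not> cf_colorable F R)"
proof (intro allI impI)
  fix R assume "R \<subseteq> M" and R_small: "|R| <o |M|"
  obtain z m where z: "z \<le> 1" and t: "t = 3 * z + 2 * m" and k: "2 * z + m \<le> k"
    using three_two_decomposition[OF assms(4-6)] .
  have "|Func {xs. set xs \<subseteq> R \<and> length xs = Suc m} L| \<le>o |L|"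
    using Func_ordLeq_if_exp_below_eq[OF assms(3) card_of_lists_length_ordLess[OF R_small assms(2)]] .
  then obtain less level index pair
    where "pair_coding L {xs. set xs \<subseteq> R \<and> length xs = Suc m} less level index pair"
    using pair_coding_exists[OF assms(1)] by blast
  then interpret cf_family L R m less level index pair z
    by (rule cf_family.intro) (unfold_locales, use assms t z in auto)
  obtain j :: "'a \<times> nat \<Rightarrow> 'a" where "inj_on j (L \<times> {..m + t})"
    using exists_inj_on_Times_finite[OF assms(1) finite_atMost] by blast
  then have j: "inj_on j (\<Union>family)"
    by (rule inj_on_subset) (use family_subset t in simp)
  have "is_system L t (k + 1) ((`) j ` family)"
    using is_system_mono[OF is_system_image[OF j family_is_system]] k t by simp
  moreover have "\<not> cf_colorable ((`) j ` family) R"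
    using cf_colorable_of_image[OF j] family_not_cf_colorable by blast
  ultimately show "\<exists>F :: 'a set set. is_system L t (k + 1) F \<and> \<not> cf_colorable F R" by blast
qed

end
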